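(* For every integer $T=3k+2$ with $k\ge 1$ and every $\sigma\in\mathfrak S_3$, the vector $\sigma c$ with $c=[2k+1,\,-k,\,-k,\,-k,\,2k+1,\,2k+1]$ defines a facet of $P^T$.
   Context: For an integer $T\ge 2$, let $\Omega_T$ be the set of words $w=s_1s_2\cdots s_T$ over $\{1,2,3\}$ with $s_l\neq s_{l+1}$ for $l=1,\dots,T-1$. For $w\in\Omega_T$ and an ordered pair $ij$, $i\neq j$, let $x_{ij}(w)$ be the number of indices $1\le l\le T-1$ with $s_ls_{l+1}=ij$. Vectors of $\mathbb R^6$ are indexed in the order $[x_{12},x_{13},x_{21},x_{23},x_{31},x_{32}]$. Let $a_w=[x_{12}(w),\dots,x_{32}(w)]$ and $P^T=\mathrm{conv}\{a_w:w\in\Omega_T\}$. $\mathfrak S_3$ acts on $\mathbb R^6$ by $(\sigma c)_{ij}=c_{\sigma(i)\sigma(j)}$. A vector $c$ defines a facet of $P^T$ if $c\cdot a_w\ge0$ for all $w\in\Omega_T$ and $\{x\in P^T: c\cdot x=0\}$ is a facet of $P^T$. *)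

theory Defs
  imports "HOL-Analysis.Analysis" "HOL-Combinatorics.Permutations"
begin

text \<open>Letters are the naturals 1,2,3. A word is a list; positions are 0-indexed,
  so the paper's index l (1..T-1) corresponds to l-1 here.\<close>

definition Omega :: "nat \<Rightarrow> nat list set" where
  "Omega T = {w. length w = T \<and> set w \<subseteq> {1,2,3} \<and>
                 (\<forall>l. Suc l < T \<longrightarrow> w ! l \<noteq> w ! Suc l)}"

definition xcount :: "nat list \<Rightarrow> nat \<Rightarrow> nat \<Rightarrow> nat" where
  "xcount w i j = card {l. Suc l < length w \<and> w ! l = i \<and> w ! Suc l = j}"

definition pairs :: "(nat \<times> nat) list" where
  "pairs = [(1,2),(1,3),(2,1),(2,3),(3,1),(3,2)]"

definition idx :: "6 \<Rightarrow> nat" where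
  "idx k = nat (Rep_bit0 k)"

definition pair_of :: "6 \<Rightarrow> nat \<times> nat" where
  "pair_of k = pairs ! idx k"

definition vec6 :: "real list \<Rightarrow> real ^ 6" where
  "vec6 l = (\<chi> k. l ! idx k)"

definition entry :: "real ^ 6 \<Rightarrow> nat \<Rightarrow> nat \<Rightarrow> real" where
  "entry v i j = v $ (THE k. pair_of k = (i, j))"

definition avec :: "nat list \<Rightarrow> real ^ 6" where
  "avec w = (\<chi> k. real (xcount w (fst (pair_of k)) (snd (pair_of k))))"

definition PT :: "nat \<Rightarrow> (real ^ 6) set" where
  "PT T = convex hull (avec ` Omega T)"

definition act :: "(nat \<Rightarrow> nat) \<Rightarrow> real ^ 6 \<Rightarrow> real ^ 6" where
  "act \<sigma> c = (\<chi> k. entry c (\<sigma> (fst (pair_of k))) (\<sigma> (snd (pair_of k))))"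

definition defines_facet :: "nat \<Rightarrow> real ^ 6 \<Rightarrow> bool" where
  "defines_facet T c \<longleftrightarrow> (\<forall>w\<in>Omega T. c \<bullet> avec w \<ge> 0) \<and>
     {x \<in> PT T. c \<bullet> x = 0} facet_of PT T"

end

theory Submission
  imports Defs
begin

text \<open>Writing c \<bullet> a_w as the sum of the entries c_ij over the T - 1 steps ij of w, we get
  (\<sigma> c) \<bullet> a_w = c \<bullet> a_(\<sigma> w), so only c itself has to be studied on words. Every step costs
  at least -k, and the three steps of cost -k (13, 21, 23) never leave 3, so at most two of
  them occur in a row: any three consecutive steps cost at least 1, and a word with 3k + 1
  steps has c \<bullet> a_w \<ge> k - k = 0. All a_w lie on the hyperplane \<Sum> x_ij = T - 1, so P^T has
  dimension at most 5; five explicit words with c \<bullet> a_w = 0 span an affine 4-space, and a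
  sixth word with c \<bullet> a_w > 0 shows that the face is proper.\<close>

definition edge :: "nat \<Rightarrow> nat \<Rightarrow> bool" where
  "edge a b \<longleftrightarrow> a \<in> {1,2,3} \<and> b \<in> {1,2,3} \<and> a \<noteq> b"

lemma edge_iff_pairs: "edge a b \<longleftrightarrow> (a, b) \<in> set pairs"
  by (auto simp: edge_def pairs_def)

lemma bij_betw_idx: "bij_betw idx UNIV {..<6}"
proof (rule bij_betw_byWitness[where f' = "\<lambda>n. Abs_bit0 (int n)"])
  show "\<forall>k\<in>UNIV. Abs_bit0 (int (idx k)) = k"
    using Rep_bit0[where 'a = "num1 bit1"] by (simp add: idx_def Rep_bit0_inverse)
  show "\<forall>n\<in>{..<6}. idx (Abs_bit0 (int n) :: 6) = n"
    by (simp add: idx_def Abs_bit0_inverse)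
  show "idx ` UNIV \<subseteq> {..<6}"
    using Rep_bit0[where 'a = "num1 bit1"] by (auto simp: idx_def nat_less_iff)
qed auto

lemma bij_betw_pair_of: "bij_betw pair_of UNIV {(a, b). edge a b}"
proof -
  have "bij_betw ((!) pairs) {..<6} (set pairs)"
    by (rule bij_betw_nth) (simp_all add: pairs_def)
  moreover have "set pairs = {(a, b). edge a b}"
    by (auto simp: edge_iff_pairs)
  ultimately show ?thesis
    unfolding pair_of_def using bij_betw_trans[OF bij_betw_idx] by (simp add: comp_def)
qed

lemma range_pair_of: "range pair_of = {(a, b). edge a b}"
  using bij_betw_pair_of by (rule bij_betw_imp_surj_on)

lemma inj_pair_of: "inj pair_of"
  using bij_betw_pair_of by (rule bij_betw_imp_inj_on)

definition coord :: "nat \<Rightarrow> nat \<Rightarrow> 6" where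
  "coord a b = (THE k. pair_of k = (a, b))"

lemma pair_of_eq_iff: "edge a b \<Longrightarrow> pair_of k = (a, b) \<longleftrightarrow> k = coord a b"
proof -
  assume "edge a b"
  then have "(a, b) \<in> range pair_of"
    by (simp add: range_pair_of)
  then obtain k0 where k0: "pair_of k0 = (a, b)"
    by (metis rangeE)
  have "pair_of k = (a, b) \<longleftrightarrow> k = k0" for k
    using k0 inj_pair_of by (metis injD)
  then show ?thesis
    unfolding coord_def by simp
qed

lemma pair_of_coord: "edge a b \<Longrightarrow> pair_of (coord a b) = (a, b)"
  by (simp add: pair_of_eq_iff)

lemma edge_pair_of: "pair_of k = (a, b) \<Longrightarrow> edge a b"
  using range_pair_of by (metis (no_types, lifting) case_prodD mem_Collect_eq rangeI)

lemma entry_eq_coord: "entry v a b = v $ coord a b"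
  by (simp add: entry_def coord_def)

lemma entry_vec6: "n < 6 \<Longrightarrow> pairs ! n = (a, b) \<Longrightarrow> entry (vec6 l) a b = l ! n"
proof -
  assume n: "n < 6" "pairs ! n = (a, b)"
  then obtain k where k: "idx k = n"
    using bij_betw_idx by (metis bij_betw_imp_surj_on imageE lessThan_iff)
  then have "pair_of k = (a, b)"
    using n by (simp add: pair_of_def)
  then have "k = coord a b"
    using edge_pair_of pair_of_eq_iff by blast
  then show ?thesis
    using k by (simp add: entry_eq_coord vec6_def)
qed

lemma entry_act: "edge a b \<Longrightarrow> entry (act \<sigma> c) a b = entry c (\<sigma> a) (\<sigma> b)"
  by (simp add: entry_eq_coord act_def pair_of_coord)

lemma avec_coord: "edge a b \<Longrightarrow> avec w $ coord a b = real (xcount w a b)"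
  by (simp add: avec_def pair_of_coord)

fun admissible :: "nat list \<Rightarrow> bool" where
  "admissible [] = True"
| "admissible [a] = (a \<in> {1,2,3})"
| "admissible (a # b # w) = (edge a b \<and> admissible (b # w))"

lemma admissible_iff:
  "admissible w \<longleftrightarrow> set w \<subseteq> {1,2,3} \<and> (\<forall>l. Suc l < length w \<longrightarrow> w ! l \<noteq> w ! Suc l)"
proof (induction w rule: admissible.induct)
  case (3 a b w)
  have all_Suc_split: "\<And>P. (\<forall>l. P l) \<longleftrightarrow> P 0 \<and> (\<forall>l. P (Suc l))"
    by (metis not0_implies_Suc)
  have "(\<forall>l. Suc l < length (a # b # w) \<longrightarrow> (a # b # w) ! l \<noteq> (a # b # w) ! Suc l) \<longleftrightarrow>
        a \<noteq> b \<and> (\<forall>l. Suc l < length (b # w) \<longrightarrow> (b # w) ! l \<noteq> (b # w) ! Suc l)"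
    by (subst all_Suc_split) simp
  then show ?case
    using "3.IH" by (auto simp: edge_def)
qed auto

lemma Omega_iff: "w \<in> Omega T \<longleftrightarrow> length w = T \<and> admissible w"
  by (auto simp: Omega_def admissible_iff)

lemma admissible_ConsD: "admissible (a # w) \<Longrightarrow> a \<in> {1,2,3}"
  by (cases w) (auto simp: edge_def)

lemma edge_permutes: "\<sigma> permutes {1,2,3} \<Longrightarrow> edge a b \<Longrightarrow> edge (\<sigma> a) (\<sigma> b)"
  using permutes_in_image permutes_inj by (fastforce simp: edge_def inj_eq)

lemma admissible_map:
  assumes "\<sigma> permutes {1,2,3}" and "admissible w"
  shows "admissible (map \<sigma> w)"
  using assms(2)
proof (induction w rule: admissible.induct)
  case (3 a b w)
  then show ?case
    using edge_permutes[OF assms(1)] by simp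
next
  case (2 a)
  then show ?case
    using permutes_in_image[OF assms(1)] by fastforce
qed simp

lemma xcount_Nil [simp]: "xcount [] i j = 0"
  and xcount_singleton [simp]: "xcount [a] i j = 0"
  by (simp_all add: xcount_def)

lemma xcount_Cons_Cons [simp]:
  "xcount (a # b # w) i j = (if a = i \<and> b = j then 1 else 0) + xcount (b # w) i j"
proof -
  let ?S = "{l. Suc l < length (b # w) \<and> (b # w) ! l = i \<and> (b # w) ! Suc l = j}"
  have "{l. Suc l < length (a # b # w) \<and> (a # b # w) ! l = i \<and> (a # b # w) ! Suc l = j}
      = (if a = i \<and> b = j then insert 0 else id) (Suc ` ?S)" (is "?L = ?R")
  proof (rule set_eqI)
    show "l \<in> ?L \<longleftrightarrow> l \<in> ?R" for l
      by (cases l) auto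
  qed
  moreover have "finite ?S"
    by (rule finite_subset[of _ "{..<length (b # w)}"]) auto
  ultimately show ?thesis
    by (simp add: xcount_def card_image)
qed

lemma xcount_map: "inj f \<Longrightarrow> xcount (map f w) (f i) (f j) = xcount w i j"
  unfolding xcount_def by (rule arg_cong[where f = card]) (auto simp: inj_eq)

fun weight :: "real ^ 6 \<Rightarrow> nat list \<Rightarrow> real" where
  "weight v (a # b # w) = entry v a b + weight v (b # w)"
| "weight v _ = 0"

lemma inner_avec: "admissible w \<Longrightarrow> v \<bullet> avec w = weight v w"
proof (induction v w rule: weight.induct)
  case (1 v a b w)
  then have ab: "edge a b" and "admissible (b # w)"
    by simp_all
  have "avec (a # b # w) = (\<chi> k. if k = coord a b then 1 else 0) + avec (b # w)"
    by (auto simp: avec_def vec_eq_iff pair_of_eq_iff[OF ab, symmetric])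
  moreover have "v \<bullet> (\<chi> k. if k = coord a b then 1 else 0) = entry v a b"
    by (simp add: inner_vec_def entry_eq_coord if_distrib cong: if_cong)
  ultimately show ?case
    using 1 by (simp add: inner_add_right)
qed (simp_all add: avec_def flip: zero_vec_def)

lemma weight_act: "admissible w \<Longrightarrow> weight (act \<sigma> c) w = weight c (map \<sigma> w)"
  by (induction "act \<sigma> c" w rule: weight.induct) (auto simp: entry_act)

lemma inner_act_avec: "admissible w \<Longrightarrow> act \<sigma> c \<bullet> avec w = weight c (map \<sigma> w)"
  by (simp add: inner_avec weight_act)

lemma inner_act_avec_map_inv:
  assumes "\<sigma> permutes {1,2,3}" and "admissible w"
  shows "act \<sigma> c \<bullet> avec (map (inv \<sigma>) w) = weight c w"
proof -
  have "map \<sigma> (map (inv \<sigma>) w) = w"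
    using permutes_inverses(1)[OF assms(1)] by (simp add: map_idI)
  then show ?thesis
    using inner_act_avec admissible_map[OF permutes_inv[OF assms(1)] assms(2)] by metis
qed

lemma map_in_Omega: "\<sigma> permutes {1,2,3} \<Longrightarrow> w \<in> Omega T \<Longrightarrow> map \<sigma> w \<in> Omega T"
  by (simp add: Omega_iff admissible_map)

lemma weight_ge_edge_bound:
  assumes "\<And>a b. edge a b \<Longrightarrow> - r \<le> entry v a b" and "admissible w"
  shows "- r * real (length w - 1) \<le> weight v w"
  using assms(2)
proof (induction w rule: admissible.induct)
  case (3 a b w)
  then have "- r \<le> entry v a b" "- r * real (length w) \<le> weight v (b # w)"
    using assms(1) by auto
  then show ?case
    by (simp add: ring_distribs)
qed simp_all

lemma weight_ge_triple_bound:
  assumes edge_bound: "\<And>a b. edge a b \<Longrightarrow> - r \<le> entry v a b"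
    and triple_bound:
      "\<And>a b c d. admissible [a, b, c, d] \<Longrightarrow> s \<le> entry v a b + entry v b c + entry v c d"
    and "admissible w"
  shows "s * real ((length w - 1) div 3) - r * real ((length w - 1) mod 3) \<le> weight v w"
  using assms(3)
proof (induction "length w" arbitrary: w rule: less_induct)
  case less
  consider "length w \<le> 3" | a b c d u where "w = a # b # c # d # u"
    by (metis Suc_le_length_iff not_less_eq_eq numeral_3_eq_3)
  then show ?case
  proof cases
    case 1
    then show ?thesis
      using weight_ge_edge_bound[OF edge_bound less.prems] by simp
  next
    case (2 a b c d u)
    then have "admissible [a, b, c, d]" and "admissible (d # u)"
      using less.prems admissible_ConsD[of d u] by auto
    then have "s \<le> entry v a b + entry v b c + entry v c d"
      and "s * real (length u div 3) - r * real (length u mod 3) \<le> weight v (d # u)"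
      using triple_bound less.hyps[of "d # u"] 2 by auto
    moreover have "(length w - 1) div 3 = Suc (length u div 3)"
      and "(length w - 1) mod 3 = length u mod 3"
      using 2 by simp_all
    ultimately show ?thesis
      using 2 by (simp add: algebra_simps)
  qed
qed

definition facet_normal :: "nat \<Rightarrow> real ^ 6" where
  "facet_normal k =
    vec6 [2 * real k + 1, - real k, - real k, - real k, 2 * real k + 1, 2 * real k + 1]"

lemma entry_facet_normal:
  assumes "edge a b"
  shows "entry (facet_normal k) a b =
    (if (a, b) \<in> {(1, 3), (2, 1), (2, 3)} then - real k else 2 * real k + 1)"
  using assms
  by (auto simp: edge_iff_pairs pairs_def facet_normal_def entry_vec6[of 0] entry_vec6[of 1]
      entry_vec6[of 2] entry_vec6[of 3] entry_vec6[of 4] entry_vec6[of 5])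

lemma weight_facet_normal_nonneg:
  assumes "admissible w" and "length w = 3 * k + 2"
  shows "0 \<le> weight (facet_normal k) w"
proof -
  have "\<And>a b. edge a b \<Longrightarrow> - real k \<le> entry (facet_normal k) a b"
    by (simp add: entry_facet_normal)
  moreover have "\<And>a b c d. admissible [a, b, c, d] \<Longrightarrow>
      1 \<le> entry (facet_normal k) a b + entry (facet_normal k) b c + entry (facet_normal k) c d"
    by (auto simp: entry_facet_normal)
  ultimately have
    "real ((length w - 1) div 3) - real k * real ((length w - 1) mod 3) \<le> weight (facet_normal k) w"
    using weight_ge_triple_bound[OF _ _ assms(1), where s = 1] by simp
  moreover have "(length w - 1) div 3 = k" "(length w - 1) mod 3 = 1"
    using assms(2) by simp_all
  ultimately show ?thesis
    by simp
qed

lemma weight_one: "weight 1 w = real (length w - 1)"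
  by (induction "1 :: real ^ 6" w rule: weight.induct) (auto simp: entry_eq_coord)

lemma aff_dim_PT_le: "aff_dim (PT T) \<le> 5"
proof -
  have "PT T \<subseteq> {x. 1 \<bullet> x = real (T - 1)}"
    unfolding PT_def
    by (rule hull_minimal) (auto simp: Omega_iff inner_avec weight_one convex_hyperplane)
  then have "aff_dim (PT T) \<le> aff_dim {x. (1 :: real ^ 6) \<bullet> x = real (T - 1)}"
    by (rule aff_dim_subset)
  also have "\<dots> = 5"
    by (simp add: vec_eq_iff)
  finally show ?thesis .
qed

fun cyc :: "nat \<Rightarrow> nat list \<Rightarrow> nat list" where
  "cyc 0 s = 2 # s"
| "cyc (Suc n) s = 2 # 1 # 3 # cyc n s"

lemma length_cyc [simp]: "length (cyc n s) = 3 * n + Suc (length s)"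
  by (induction n) simp_all

lemma admissible_Cons_cyc [simp]:
  "admissible (a # cyc n s) \<longleftrightarrow> edge a 2 \<and> admissible (cyc n s)"
  by (cases n) simp_all

lemma weight_Cons_cyc [simp]: "weight v (a # cyc n s) = entry v a 2 + weight v (cyc n s)"
  by (cases n) simp_all

lemma xcount_Cons_cyc [simp]:
  "xcount (a # cyc n s) i j = (if a = i \<and> 2 = j then 1 else 0) + xcount (cyc n s) i j"
  by (cases n) simp_all

lemma admissible_cyc [simp]: "admissible (cyc n s) \<longleftrightarrow> admissible (2 # s)"
  by (induction n) (simp_all add: edge_def)

lemma weight_cyc [simp]:
  "weight v (cyc n s) = real n * (entry v 2 1 + entry v 1 3 + entry v 3 2) + weight v (2 # s)"
  by (induction n) (simp_all add: algebra_simps)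

lemma xcount_cyc [simp]:
  "xcount (cyc n s) i j =
    n * (if (i, j) \<in> {(2, 1), (1, 3), (3, 2)} then 1 else 0) + xcount (2 # s) i j"
  by (induction n) auto

definition tight_words :: "nat \<Rightarrow> nat list list" where
  "tight_words m = [cyc (Suc m) [1], 1 # 3 # cyc m [1, 3], 2 # 1 # cyc m [1, 3],
                    cyc (Suc m) [3], cyc m [1, 3, 1, 3]]"

lemma tight_wordsD:
  assumes "w \<in> set (tight_words m)"
  shows "admissible w" and "length w = 3 * Suc m + 2" and "weight (facet_normal (Suc m)) w = 0"
  using assms by (auto simp: tight_words_def edge_def entry_facet_normal algebra_simps)

lemma exists_slack_word:
  "\<exists>w. admissible w \<and> length w = 3 * Suc m + 2 \<and> 0 < weight (facet_normal (Suc m)) w"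
  by (rule exI[of _ "1 # 2 # 1 # 3 # cyc m []"]) (simp add: edge_def entry_facet_normal)

lemma biorthogonal_imp_independent:
  fixes f g :: "'i \<Rightarrow> 'a::real_inner"
  assumes "finite I"
    and biorth: "\<And>i j. i \<in> I \<Longrightarrow> j \<in> I \<Longrightarrow> f i \<bullet> g j = (if i = j then 1 else 0)"
  shows "independent (f ` I)" and "inj_on f I"
proof -
  show inj: "inj_on f I"
    by (rule inj_onI) (metis biorth zero_neq_one)
  show "independent (f ` I)"
  proof (rule independent_if_scalars_zero)
    fix c x
    assume sum: "(\<Sum>y\<in>f ` I. c y *\<^sub>R y) = 0" and "x \<in> f ` I"
    then obtain j where j: "j \<in> I" "x = f j"
      by blast
    have "0 = (\<Sum>y\<in>f ` I. c y *\<^sub>R y) \<bullet> g j"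
      by (simp add: sum)
    also have "\<dots> = (\<Sum>i\<in>I. c (f i) * (f i \<bullet> g j))"
      by (simp add: inner_sum_left sum.reindex[OF inj])
    also have "\<dots> = (\<Sum>i\<in>I. if i = j then c (f i) else 0)"
      by (rule sum.cong) (simp_all add: biorth j)
    also have "\<dots> = c x"
      using j \<open>finite I\<close> by simp
    finally show "c x = 0" ..
  qed (use \<open>finite I\<close> in simp)
qed

lemma card_le_aff_dim_if_independent_differences:
  fixes S :: "'a::euclidean_space set"
  assumes "S \<noteq> {}" and "independent B" and "B \<subseteq> {x - y | x y. x \<in> S \<and> y \<in> S}"
  shows "int (card B) \<le> aff_dim S"
proof -
  obtain a where a: "a \<in> S"
    using assms(1) by blast
  have "B \<subseteq> span ((\<lambda>x. x - a) ` S)"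
  proof
    fix z assume "z \<in> B"
    then obtain x y where z: "z = x - y" "x \<in> S" "y \<in> S"
      using assms(3) by auto
    then have "(x - a) - (y - a) \<in> span ((\<lambda>x. x - a) ` S)"
      by (intro span_diff span_base) auto
    then show "z \<in> span ((\<lambda>x. x - a) ` S)"
      using z by simp
  qed
  then have "card B \<le> dim ((\<lambda>x. x - a) ` S)"
    using independent_card_le_dim[OF _ assms(2)] by (metis dim_span)
  also have "int (dim ((\<lambda>x. x - a) ` S)) = aff_dim S"
    by (simp add: aff_dim_eq_dim_subtract[OF hull_inc[OF a]])
  finally show ?thesis
    by simp
qed

lemma facet_of_convex_hull_supporting_hyperplane:
  fixes c :: "'a::euclidean_space"
  assumes nonneg: "\<And>v. v \<in> V \<Longrightarrow> 0 \<le> c \<bullet> v"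
    and pos: "u \<in> V" "0 < c \<bullet> u"
    and nonempty: "{x \<in> convex hull V. c \<bullet> x = 0} \<noteq> {}"
    and dim: "aff_dim (convex hull V) \<le> aff_dim {x \<in> convex hull V. c \<bullet> x = 0} + 1"
  shows "{x \<in> convex hull V. c \<bullet> x = 0} facet_of convex hull V"
proof -
  let ?F = "{x \<in> convex hull V. c \<bullet> x = 0}"
  have "convex hull V \<subseteq> {x. 0 \<le> c \<bullet> x}"
    by (rule hull_minimal) (use nonneg convex_halfspace_ge in auto)
  then have "(convex hull V \<inter> {x. c \<bullet> x = 0}) face_of convex hull V"
    by (intro face_of_Int_supporting_hyperplane_ge convex_convex_hull) auto
  then have face: "?F face_of convex hull V"
    by (simp add: Int_def)
  moreover have "?F \<noteq> convex hull V"
    using pos hull_inc[of u V] by force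
  ultimately have "aff_dim ?F < aff_dim (convex hull V)"
    by (intro face_of_aff_dim_lt) (simp_all add: convex_convex_hull)
  then show ?thesis
    unfolding facet_of_def using face nonempty dim by simp
qed

lemma avec_map_coord:
  assumes "\<sigma> permutes {1,2,3}" and "edge a b"
  shows "avec (map \<sigma> w) $ coord (\<sigma> a) (\<sigma> b) = real (xcount w a b)"
  using assms by (simp add: avec_coord edge_permutes xcount_map permutes_inj)

text \<open>In the coordinates 12, 13, 23, 31 the tight words give the points (0, k, 0, 0),
  (0, k + 1, 0, 0), (1, k, 0, 0), (0, k, 1, 0), (0, k + 1, 0, 1), where k = m + 1.\<close>

lemma four_le_aff_dim_tight_words:
  assumes \<sigma>: "\<sigma> permutes {1,2,3}"
  shows "4 \<le> aff_dim ((\<lambda>w. avec (map \<sigma> w)) ` set (tight_words m))"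
proof -
  define p where "p w = avec (map \<sigma> w)" for w
  let ?W = "tight_words m"
  define d where "d i = [p (?W ! 2) - p (?W ! 0), p (?W ! 1) - p (?W ! 0),
                        p (?W ! 3) - p (?W ! 0), p (?W ! 4) - p (?W ! 1)] ! i" for i
  define e where "e j = axis ([coord (\<sigma> 1) (\<sigma> 2), coord (\<sigma> 1) (\<sigma> 3),
                               coord (\<sigma> 2) (\<sigma> 3), coord (\<sigma> 3) (\<sigma> 1)] ! j) (1 :: real)" for j
  have p_coord: "p w $ coord (\<sigma> a) (\<sigma> b) = real (xcount w a b)" if "edge a b" for w a b
    unfolding p_def using avec_map_coord[OF \<sigma> that] .
  have biorth: "d i \<bullet> e j = (if i = j then 1 else 0)"
    if "i \<in> {0, 1, 2, 3}" and "j \<in> {0, 1, 2, 3}" for i j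
    using that by (auto simp: d_def e_def inner_axis p_coord edge_def tight_words_def)
  have "independent (d ` {0, 1, 2, 3})" and "inj_on d {0, 1, 2, 3}"
    using biorthogonal_imp_independent[of "{0, 1, 2, 3}" d e, OF _ biorth] by simp_all
  moreover have "d ` {0, 1, 2, 3} \<subseteq> {x - y | x y. x \<in> p ` set ?W \<and> y \<in> p ` set ?W}"
    by (auto simp: d_def tight_words_def)
  ultimately have "int (card (d ` {0, 1, 2, 3})) \<le> aff_dim (p ` set ?W)"
    by (intro card_le_aff_dim_if_independent_differences) (auto simp: tight_words_def)
  then show ?thesis
    using \<open>inj_on d {0, 1, 2, 3}\<close> by (simp add: card_image p_def)
qed

theorem proposition9:
  fixes k T :: nat and \<sigma> :: "nat \<Rightarrow> nat"
  assumes "k \<ge> 1" and "T = 3 * k + 2" and "\<sigma> permutes {1, 2, 3}"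
  shows "defines_facet T (act \<sigma> (vec6 [2 * real k + 1, - real k, - real k, - real k,
                                       2 * real k + 1, 2 * real k + 1]))"
proof -
  obtain m where k: "k = Suc m"
    using assms(1) by (cases k) auto
  define c where "c = act \<sigma> (facet_normal k)"
  define F where "F = {x \<in> PT T. c \<bullet> x = 0}"
  define vertex where "vertex w = avec (map (inv \<sigma>) w)" for w
  have vertex: "vertex w \<in> avec ` Omega T" "c \<bullet> vertex w = weight (facet_normal k) w"
    if "admissible w" "length w = T" for w
    using that map_in_Omega[OF permutes_inv[OF assms(3)], of w] inner_act_avec_map_inv[OF assms(3)]
    by (simp_all add: vertex_def c_def Omega_iff)
  have nonneg: "\<forall>w\<in>Omega T. 0 \<le> c \<bullet> avec w"
    using assms(2,3)
    by (simp add: Omega_iff c_def inner_act_avec admissible_map weight_facet_normal_nonneg)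
  have tight: "vertex ` set (tight_words m) \<subseteq> F"
    using tight_wordsD[of _ m] vertex assms(2) k by (auto simp: F_def PT_def hull_inc)
  then have "aff_dim (PT T) \<le> aff_dim F + 1"
    using aff_dim_PT_le[of T] four_le_aff_dim_tight_words[OF permutes_inv[OF assms(3)], of m]
      aff_dim_subset[OF tight] by (simp add: vertex_def)
  moreover obtain u where "admissible u" "length u = T" "0 < weight (facet_normal k) u"
    using exists_slack_word assms(2) k by blast
  moreover have "F \<noteq> {}"
    using tight by (auto simp: tight_words_def)
  ultimately have "F facet_of PT T"
    using nonneg vertex unfolding F_def PT_def
    by (intro facet_of_convex_hull_supporting_hyperplane[where u = "vertex u"]) auto
  then show ?thesis
    using nonneg by (simp add: defines_facet_def c_def facet_normal_def F_def)
qed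

end
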